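(* Let $A$ be a semilattice of groups. The set $\mathrm{iend}\,A$ of relatively invertible endomorphisms of $A$ is an (inverse) subsemigroup of the monoid $\mathrm{End}\,A$ (under composition), and it is isomorphic to $\mathcal I_{ui}(A)$.
   Context: A semilattice of groups is an inverse semigroup $A$ whose idempotents are central. An endomorphism $\varphi$ of $A$ is relatively invertible if there exist $\bar\varphi\in\mathrm{End}\,A$ and $e_\varphi\in E(A)$ such that $\bar\varphi(\varphi(a))=e_\varphi a$ and $\varphi(\bar\varphi(a))=\varphi(e_\varphi)a$ for all $a\in A$, $e_\varphi$ is the identity of $\bar\varphi(A)$ and $\varphi(e_\varphi)$ is the identity of $\varphi(A)$. $\mathcal I_{ui}(A)$ denotes the inverse semigroup of all isomorphisms between unital ideals of $A$ (ideals of the form $eA$, $e\in E(A)$), with the usual composition of partial bijections. *)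

theory Defs
  imports Main "HOL-Library.FuncSet"
begin

definition semigrp :: "'a set \<Rightarrow> ('a \<Rightarrow> 'a \<Rightarrow> 'a) \<Rightarrow> bool" where
  "semigrp S m \<longleftrightarrow> (\<forall>a\<in>S. \<forall>b\<in>S. m a b \<in> S) \<and>
     (\<forall>a\<in>S. \<forall>b\<in>S. \<forall>c\<in>S. m (m a b) c = m a (m b c))"

definition inverse_semigrp :: "'a set \<Rightarrow> ('a \<Rightarrow> 'a \<Rightarrow> 'a) \<Rightarrow> bool" where
  "inverse_semigrp S m \<longleftrightarrow> semigrp S m \<and>
     (\<forall>a\<in>S. \<exists>!b. b \<in> S \<and> m (m a b) a = a \<and> m (m b a) b = b)"

definition idems :: "'a set \<Rightarrow> ('a \<Rightarrow> 'a \<Rightarrow> 'a) \<Rightarrow> 'a set" where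
  "idems S m = {e \<in> S. m e e = e}"

definition semilattice_of_groups :: "'a set \<Rightarrow> ('a \<Rightarrow> 'a \<Rightarrow> 'a) \<Rightarrow> bool" where
  "semilattice_of_groups S m \<longleftrightarrow> inverse_semigrp S m \<and>
     (\<forall>e\<in>idems S m. \<forall>a\<in>S. m e a = m a e)"

text \<open>Endomorphisms, as extensional functions S \<rightarrow> S (undefined off S); composition
  is FuncSet's compose S, i.e. (compose S f g) a = f (g a).\<close>

definition endos :: "'a set \<Rightarrow> ('a \<Rightarrow> 'a \<Rightarrow> 'a) \<Rightarrow> ('a \<Rightarrow> 'a) set" where
  "endos S m = {f. f \<in> S \<rightarrow>\<^sub>E S \<and> (\<forall>a\<in>S. \<forall>b\<in>S. f (m a b) = m (f a) (f b))}"

definition is_identity_of :: "('a \<Rightarrow> 'a \<Rightarrow> 'a) \<Rightarrow> 'a \<Rightarrow> 'a set \<Rightarrow> bool" where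
  "is_identity_of m e T \<longleftrightarrow> e \<in> T \<and> (\<forall>t\<in>T. m e t = t \<and> m t e = t)"

definition rel_invertible :: "'a set \<Rightarrow> ('a \<Rightarrow> 'a \<Rightarrow> 'a) \<Rightarrow> ('a \<Rightarrow> 'a) \<Rightarrow> bool" where
  "rel_invertible S m f \<longleftrightarrow> f \<in> endos S m \<and>
     (\<exists>g\<in>endos S m. \<exists>e\<in>idems S m.
        (\<forall>a\<in>S. g (f a) = m e a) \<and> (\<forall>a\<in>S. f (g a) = m (f e) a) \<and>
        is_identity_of m e (g ` S) \<and> is_identity_of m (f e) (f ` S))"

definition iend :: "'a set \<Rightarrow> ('a \<Rightarrow> 'a \<Rightarrow> 'a) \<Rightarrow> ('a \<Rightarrow> 'a) set" where
  "iend S m = {f. rel_invertible S m f}"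

definition unital_ideal :: "'a set \<Rightarrow> ('a \<Rightarrow> 'a \<Rightarrow> 'a) \<Rightarrow> 'a \<Rightarrow> 'a set" where
  "unital_ideal S m e = (\<lambda>a. m e a) ` S"

definition Iui :: "'a set \<Rightarrow> ('a \<Rightarrow> 'a \<Rightarrow> 'a) \<Rightarrow> ('a \<Rightarrow> 'a option) set" where
  "Iui S m = {p. \<exists>e\<in>idems S m. \<exists>f\<in>idems S m.
      dom p = unital_ideal S m e \<and> ran p = unital_ideal S m f \<and> inj_on p (dom p) \<and>
      (\<forall>x\<in>dom p. \<forall>y\<in>dom p. p (m x y) = Some (m (the (p x)) (the (p y))))}"

end

theory Submission
  imports Defs
begin

text \<open>
  If g is a relative inverse of f with idempotent e, then f maps the unital ideal eA
  isomorphically onto f(e)A, with inverse g; conversely an isomorphism q: eA \<rightarrow> e'A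
  extends to the relatively invertible endomorphism a \<mapsto> q(ea), with relative inverse
  a \<mapsto> q\<inverse>(e'a). Since e is determined by f, restricting f to eA is a bijection from iend A
  onto I_ui(A). Relative inverses compose contravariantly, with idempotent g2(e1) e2
  for the composite f1 f2, which makes the bijection multiplicative. Finally fgf = f,
  and the idempotents of iend A are the multiplications by idempotents of A, which
  commute because idempotents are central; so iend A is an inverse semigroup.
\<close>

lemma semigrp_inverse_unique:
  assumes "semigrp T mul"
    and idempotents_commute:
      "\<And>x y. x \<in> T \<Longrightarrow> y \<in> T \<Longrightarrow> mul x x = x \<Longrightarrow> mul y y = y \<Longrightarrow> mul x y = mul y x"
    and T: "a \<in> T" "b \<in> T" "c \<in> T"
    and b: "mul (mul a b) a = a" "mul (mul b a) b = b"
    and c: "mul (mul a c) a = a" "mul (mul c a) c = c"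
  shows "b = c"
proof -
  have cl: "\<And>x y. x \<in> T \<Longrightarrow> y \<in> T \<Longrightarrow> mul x y \<in> T"
   and as: "\<And>x y z. x \<in> T \<Longrightarrow> y \<in> T \<Longrightarrow> z \<in> T \<Longrightarrow> mul (mul x y) z = mul x (mul y z)"
    using assms(1) unfolding semigrp_def by blast+
  have idem: "mul (mul x y) (mul x y) = mul x y" if "x \<in> T" "y \<in> T" "mul (mul x y) x = x" for x y
  proof -
    have "mul (mul x y) (mul x y) = mul (mul (mul x y) x) y" using that(1,2) by (simp add: as cl)
    also have "\<dots> = mul x y" using that(3) by simp
    finally show ?thesis .
  qed
  have ba_ca: "mul (mul b a) (mul c a) = mul (mul c a) (mul b a)"
    by (rule idempotents_commute) (use T b c idem cl in auto)
  have ab_ac: "mul (mul a b) (mul a c) = mul (mul a c) (mul a b)"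
    by (rule idempotents_commute) (use T b c idem cl in auto)
  have "b = mul (mul b (mul (mul a c) a)) b" using b(2) c(1) by simp
  also have "\<dots> = mul (mul (mul b a) (mul c a)) b" using as cl T by metis
  also have "\<dots> = mul (mul c a) (mul (mul b a) b)" unfolding ba_ca using as cl T by metis
  also have "\<dots> = mul (mul c a) b" using b(2) by simp
  finally have b_eq: "b = mul (mul c a) b" .
  have "c = mul c (mul (mul (mul a b) a) c)" using c(2) b(1) as cl T by metis
  also have "\<dots> = mul c (mul (mul a c) (mul a b))" unfolding ab_ac[symmetric] using as cl T by metis
  also have "\<dots> = mul (mul c a) b" using c(2) as cl T by metis
  finally show ?thesis using b_eq by simp
qed

lemma is_identity_of_hom_image:
  assumes "is_identity_of mul e A" "is_identity_of mul' e' B"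
    and "q ` A = B" "\<And>x y. x \<in> A \<Longrightarrow> y \<in> A \<Longrightarrow> q (mul x y) = mul' (q x) (q y)"
  shows "q e = e'"
proof -
  obtain x where x: "x \<in> A" "q x = e'" using assms(2,3) unfolding is_identity_of_def by blast
  have e: "e \<in> A" "mul e x = x" using assms(1) x unfolding is_identity_of_def by auto
  have "q e = mul' (q e) (q x)" using assms(2,3) e x unfolding is_identity_of_def by auto
  also have "\<dots> = q (mul e x)" using assms(4)[OF e(1) x(1)] by simp
  also have "\<dots> = e'" using e x by simp
  finally show ?thesis .
qed

lemma inv_into_hom:
  assumes "bij_betw q A B" "\<And>x y. x \<in> A \<Longrightarrow> y \<in> A \<Longrightarrow> mul x y \<in> A"
    and "\<And>x y. x \<in> A \<Longrightarrow> y \<in> A \<Longrightarrow> q (mul x y) = mul' (q x) (q y)"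
    and "y \<in> B" "y' \<in> B"
  shows "inv_into A q (mul' y y') = mul (inv_into A q y) (inv_into A q y')"
proof -
  have inv: "inv_into A q z \<in> A" "q (inv_into A q z) = z" if "z \<in> B" for z
    using assms(1) that by (auto simp: bij_betw_def inv_into_into f_inv_into_f)
  have "mul' y y' = q (mul (inv_into A q y) (inv_into A q y'))"
    using assms(3-5) inv by simp
  then show ?thesis
    using assms(1,2,4,5) inv by (simp add: bij_betw_def inv_into_f_f)
qed

locale semilattice_groups =
  fixes S :: "'a set" and m :: "'a \<Rightarrow> 'a \<Rightarrow> 'a"
  assumes semilattice_of_groups: "semilattice_of_groups S m"
begin

lemma closed [simp, intro]: "a \<in> S \<Longrightarrow> b \<in> S \<Longrightarrow> m a b \<in> S"
  and assoc [simp]: "a \<in> S \<Longrightarrow> b \<in> S \<Longrightarrow> c \<in> S \<Longrightarrow> m (m a b) c = m a (m b c)"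
  using semilattice_of_groups
  unfolding semilattice_of_groups_def inverse_semigrp_def semigrp_def by blast+

lemma idems_central: "e \<in> idems S m \<Longrightarrow> a \<in> S \<Longrightarrow> m e a = m a e"
  using semilattice_of_groups unfolding semilattice_of_groups_def by blast

lemma idems_in_carrier [simp, intro]: "e \<in> idems S m \<Longrightarrow> e \<in> S"
  and idem_mult_self [simp]: "e \<in> idems S m \<Longrightarrow> m e e = e"
  by (auto simp: idems_def)

lemma idem_absorb [simp]: "e \<in> idems S m \<Longrightarrow> a \<in> S \<Longrightarrow> m e (m e a) = m e a"
  using assoc[of e e a] by simp

lemma idems_commute: "e \<in> idems S m \<Longrightarrow> f \<in> idems S m \<Longrightarrow> m e f = m f e"
  by (simp add: idems_central)

lemma idems_left_commute:
  "e \<in> idems S m \<Longrightarrow> f \<in> idems S m \<Longrightarrow> a \<in> S \<Longrightarrow> m e (m f a) = m f (m e a)"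
  using assoc[of e f a] assoc[of f e a] idems_commute[of e f] by simp

lemma idems_mult [intro]:
  assumes "e \<in> idems S m" "f \<in> idems S m"
  shows "m e f \<in> idems S m"
proof -
  have "m (m e f) (m e f) = m e (m f (m e f))" using assms by simp
  also have "\<dots> = m e f" using assms idems_left_commute[of f e f] by simp
  finally show ?thesis using assms unfolding idems_def by blast
qed

lemma idems_mult_fixed_iff:
  assumes e: "e \<in> idems S m" and f: "f \<in> idems S m" and x: "x \<in> S"
  shows "m (m e f) x = x \<longleftrightarrow> m e x = x \<and> m f x = x"
proof
  assume "m (m e f) x = x"
  then have efx: "m e (m f x) = x" using e f x by simp
  then have "m e x = x" using idem_absorb[OF e, of "m f x"] f x by simp
  moreover have "m f x = x" using efx idems_left_commute[OF f e, of "m f x"] f x by simp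
  ultimately show "m e x = x \<and> m f x = x" ..
qed (use e f x in simp)

lemma idem_distrib: "e \<in> idems S m \<Longrightarrow> a \<in> S \<Longrightarrow> b \<in> S \<Longrightarrow> m e (m a b) = m (m e a) (m e b)"
  using assoc[of a e b] assoc[of e a b] idems_central[of e a] by simp

lemma idem_mult_endo: "e \<in> idems S m \<Longrightarrow> restrict (m e) S \<in> endos S m"
  unfolding endos_def using idem_distrib by (auto simp del: assoc simp: restrict_PiE_iff)

lemma unital_ideal_iff: "e \<in> idems S m \<Longrightarrow> x \<in> unital_ideal S m e \<longleftrightarrow> x \<in> S \<and> m e x = x"
  unfolding unital_ideal_def by (auto intro!: image_eqI[where x = x])

lemma unital_ideal_identity: "e \<in> idems S m \<Longrightarrow> is_identity_of m e (unital_ideal S m e)"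
  using idems_central[of e] by (auto simp: is_identity_of_def unital_ideal_iff)

lemma unital_ideal_mult:
  assumes "e \<in> idems S m" "x \<in> unital_ideal S m e" "y \<in> unital_ideal S m e"
  shows "m x y \<in> unital_ideal S m e"
proof -
  have "x \<in> S" "y \<in> S" "m e x = x" using assms by (simp_all add: unital_ideal_iff)
  then have "m e (m x y) = m x y" using assoc[of e x y] assms(1) by simp
  then show ?thesis using assms by (simp add: unital_ideal_iff)
qed

lemma unital_ideal_inj:
  assumes "e \<in> idems S m" "f \<in> idems S m" "unital_ideal S m e = unital_ideal S m f"
  shows "e = f"
proof -
  have "m f e = e" "m e f = f"
    using assms unital_ideal_iff[of f e] unital_ideal_iff[of e f] unital_ideal_iff[of e e]
      unital_ideal_iff[of f f] by auto
  then show ?thesis using idems_commute[OF assms(1,2)] by simp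
qed

lemma endo_closed [simp, intro]: "f \<in> endos S m \<Longrightarrow> a \<in> S \<Longrightarrow> f a \<in> S"
  and endo_mult [simp]: "f \<in> endos S m \<Longrightarrow> a \<in> S \<Longrightarrow> b \<in> S \<Longrightarrow> f (m a b) = m (f a) (f b)"
  and endo_undefined: "f \<in> endos S m \<Longrightarrow> a \<notin> S \<Longrightarrow> f a = undefined"
  unfolding endos_def by (auto simp: PiE_iff extensional_def)

lemma endo_idems [intro]: "f \<in> endos S m \<Longrightarrow> e \<in> idems S m \<Longrightarrow> f e \<in> idems S m"
proof -
  assume "f \<in> endos S m" "e \<in> idems S m"
  then have "m (f e) (f e) = f e" using endo_mult[of f e e] by simp
  then show ?thesis using \<open>f \<in> endos S m\<close> \<open>e \<in> idems S m\<close> unfolding idems_def by auto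
qed

lemma compose_endo [intro]:
  assumes "f \<in> endos S m" "g \<in> endos S m"
  shows "compose S f g \<in> endos S m"
proof -
  have "compose S f g \<in> S \<rightarrow>\<^sub>E S" using assms by (simp add: compose_def restrict_PiE_iff)
  moreover have "\<forall>a\<in>S. \<forall>b\<in>S. compose S f g (m a b) = m (compose S f g a) (compose S f g b)"
    using assms by (simp add: compose_eq)
  ultimately show ?thesis unfolding endos_def by blast
qed

lemma endo_eqI:
  assumes "f \<in> endos S m" "g \<in> endos S m" "\<And>a. a \<in> S \<Longrightarrow> f a = g a"
  shows "f = g"
proof
  fix a show "f a = g a" by (cases "a \<in> S") (simp_all add: assms endo_undefined)
qed

lemma is_identity_of_endo_image:
  assumes "h \<in> endos S m" "e \<in> idems S m" "e \<in> h ` S" "\<And>a. a \<in> S \<Longrightarrow> m e (h a) = h a"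
  shows "is_identity_of m e (h ` S)"
  using assms idems_central[OF assms(2)] unfolding is_identity_of_def by auto

text \<open>
  Of the two identity
  conditions only the left-identity parts are kept; membership of the identities in the
  images and the right-identity parts follow by centrality (rel_invertible_iff).
\<close>

definition rel_inv :: "('a \<Rightarrow> 'a) \<Rightarrow> ('a \<Rightarrow> 'a) \<Rightarrow> 'a \<Rightarrow> bool" where
  "rel_inv f g e \<longleftrightarrow> f \<in> endos S m \<and> g \<in> endos S m \<and> e \<in> idems S m \<and>
     (\<forall>a\<in>S. g (f a) = m e a) \<and> (\<forall>a\<in>S. f (g a) = m (f e) a) \<and>
     (\<forall>a\<in>S. m e (g a) = g a) \<and> (\<forall>a\<in>S. m (f e) (f a) = f a)"

lemma rel_inv_endos: "rel_inv f g e \<Longrightarrow> f \<in> endos S m" "rel_inv f g e \<Longrightarrow> g \<in> endos S m"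
  and rel_inv_idem: "rel_inv f g e \<Longrightarrow> e \<in> idems S m"
  and rel_inv_comp_left: "rel_inv f g e \<Longrightarrow> a \<in> S \<Longrightarrow> g (f a) = m e a"
  and rel_inv_comp_right: "rel_inv f g e \<Longrightarrow> a \<in> S \<Longrightarrow> f (g a) = m (f e) a"
  and rel_inv_image_left: "rel_inv f g e \<Longrightarrow> a \<in> S \<Longrightarrow> m e (g a) = g a"
  and rel_inv_image_right: "rel_inv f g e \<Longrightarrow> a \<in> S \<Longrightarrow> m (f e) (f a) = f a"
  unfolding rel_inv_def by auto

lemma rel_inv_comp_left_idem: "rel_inv f g e \<Longrightarrow> g (f e) = e"
  using rel_inv_comp_left[of f g e e] rel_inv_idem[of f g e] by simp

lemma rel_inv_absorb: "rel_inv f g e \<Longrightarrow> a \<in> S \<Longrightarrow> f (m e a) = f a"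
  using rel_inv_image_right[of f g e a] rel_inv_endos(1)[of f g e] rel_inv_idem[of f g e] by simp

lemma rel_invertible_iff: "rel_invertible S m f \<longleftrightarrow> (\<exists>g e. rel_inv f g e)"
proof
  assume "rel_invertible S m f"
  then show "\<exists>g e. rel_inv f g e"
    unfolding rel_invertible_def rel_inv_def is_identity_of_def by blast
next
  assume "\<exists>g e. rel_inv f g e"
  then obtain g e where r: "rel_inv f g e" by blast
  note endos = rel_inv_endos[OF r] and e = rel_inv_idem[OF r]
  have "is_identity_of m e (g ` S)"
  proof (rule is_identity_of_endo_image[OF endos(2) e])
    show "e \<in> g ` S" using rel_inv_comp_left_idem[OF r] endo_closed[OF endos(1)] e by force
  qed (rule rel_inv_image_left[OF r])
  moreover have "is_identity_of m (f e) (f ` S)"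
    using e endos rel_inv_image_right[OF r] by (intro is_identity_of_endo_image) auto
  ultimately show "rel_invertible S m f"
    unfolding rel_invertible_def using r e endos rel_inv_comp_left rel_inv_comp_right by blast
qed

lemma rel_inv_unique:
  assumes r: "rel_inv f g e" and r': "rel_inv f g' e'"
  shows "e = e'"
proof -
  have e: "e \<in> idems S m" and e': "e' \<in> idems S m" using r r' by (simp_all add: rel_inv_idem)
  have f: "f \<in> endos S m" using r by (simp add: rel_inv_endos)
  have "f e = m (f e') (f e)" using rel_inv_image_right[OF r', of e] e by simp
  also have "\<dots> = m (f e) (f e')" using f e e' by (simp add: idems_commute endo_idems)
  also have "\<dots> = f e'" using rel_inv_image_right[OF r, of e'] e' by simp
  finally have fe: "f e = f e'" .
  have "e = m e e'"
    using rel_inv_comp_left[OF r, of e] rel_inv_comp_left[OF r, of e'] e e' fe by simp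
  moreover have "e' = m e' e"
    using rel_inv_comp_left[OF r', of e] rel_inv_comp_left[OF r', of e'] e e' fe by simp
  ultimately show ?thesis using idems_commute[OF e e'] by simp
qed

lemma rel_inv_sym: "rel_inv f g e \<Longrightarrow> rel_inv g f (f e)"
  using rel_inv_comp_left_idem[of f g e] endo_idems[of f e]
  unfolding rel_inv_def by simp

lemma rel_inv_regular:
  assumes r: "rel_inv f g e"
  shows "compose S (compose S f g) f = f"
proof (rule endo_eqI)
  note f = rel_inv_endos(1)[OF r] and g = rel_inv_endos(2)[OF r] and e = rel_inv_idem[OF r]
  show "compose S (compose S f g) f \<in> endos S m" "f \<in> endos S m" using f g by auto
  fix a assume a: "a \<in> S"
  have "compose S (compose S f g) f a = f (m e a)"
    using a f rel_inv_comp_left[OF r a] by (simp add: compose_eq)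
  also have "\<dots> = f a" using rel_inv_absorb[OF r a] .
  finally show "compose S (compose S f g) f a = f a" .
qed

lemma rel_inv_idempotent:
  assumes r: "rel_inv f g e" and ff: "compose S f f = f"
  shows "f = restrict (m e) S"
proof -
  note f = rel_inv_endos(1)[OF r] and g = rel_inv_endos(2)[OF r] and e = rel_inv_idem[OF r]
  have ffa: "f (f a) = f a" if "a \<in> S" for a using fun_cong[OF ff, of a] that by (simp add: compose_eq)
  have e_f: "m e (f a) = m e a" if "a \<in> S" for a
    using rel_inv_comp_left[OF r, of "f a"] rel_inv_comp_left[OF r that] ffa[OF that] f that by simp
  have "f (g e) = m (f e) e" using rel_inv_comp_right[OF r, of e] e by simp
  also have "\<dots> = m e (f e)" using idems_commute[OF endo_idems[OF f e] e] .
  also have "\<dots> = e" using e_f[of e] e by simp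
  finally have fe: "f e = e" using ffa[of "g e"] g e by simp
  show ?thesis
  proof (rule endo_eqI[OF f])
    show "restrict (m e) S \<in> endos S m" using e by (rule idem_mult_endo)
    fix a assume "a \<in> S"
    then show "f a = restrict (m e) S a"
      using rel_inv_image_right[OF r, of a] fe e_f by simp
  qed
qed

lemma rel_inv_compose_idem:
  assumes r1: "rel_inv f1 g1 e1" and r2: "rel_inv f2 g2 e2"
  shows "f1 (f2 (m (g2 e1) e2)) = m (f1 e1) (f1 (f2 e2))"
proof -
  note f1 = rel_inv_endos(1)[OF r1] and e1 = rel_inv_idem[OF r1]
  note f2 = rel_inv_endos(1)[OF r2] and g2 = rel_inv_endos(2)[OF r2] and e2 = rel_inv_idem[OF r2]
  have f2e2: "f2 e2 \<in> idems S m" using f2 e2 by blast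
  have "f2 (m (g2 e1) e2) = m (f2 e2) (m e1 (f2 e2))"
    using rel_inv_comp_right[OF r2, of e1] f2 g2 e1 e2 f2e2 by simp
  also have "\<dots> = m e1 (f2 e2)" using idems_left_commute[OF f2e2 e1, of "f2 e2"] f2e2 e1 by simp
  finally show ?thesis using f1 e1 f2e2 by simp
qed

lemma rel_inv_compose:
  assumes r1: "rel_inv f1 g1 e1" and r2: "rel_inv f2 g2 e2"
  shows "rel_inv (compose S f1 f2) (compose S g2 g1) (m (g2 e1) e2)"
proof -
  note f1 = rel_inv_endos(1)[OF r1] and g1 = rel_inv_endos(2)[OF r1] and e1 = rel_inv_idem[OF r1]
  note f2 = rel_inv_endos(1)[OF r2] and g2 = rel_inv_endos(2)[OF r2] and e2 = rel_inv_idem[OF r2]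
  define E where "E = m (g2 e1) e2"
  have g2e1: "g2 e1 \<in> idems S m" and f2e2: "f2 e2 \<in> idems S m" and f1e1: "f1 e1 \<in> idems S m"
    and f1f2e2: "f1 (f2 e2) \<in> idems S m" and E: "E \<in> idems S m"
    using f1 f2 g2 e1 e2 by (auto simp: E_def)
  have f_E: "f1 (f2 E) = m (f1 e1) (f1 (f2 e2))"
    unfolding E_def by (rule rel_inv_compose_idem[OF r1 r2])
  have "g2 (g1 (f1 (f2 a))) = m E a" if a: "a \<in> S" for a
    using rel_inv_comp_left[OF r1, of "f2 a"] rel_inv_comp_left[OF r2 a] f2 g2 e1 e2 g2e1 a
    by (simp add: E_def)
  moreover have "f1 (f2 (g2 (g1 a))) = m (f1 (f2 E)) a" if a: "a \<in> S" for a
  proof -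
    have "f1 (f2 (g2 (g1 a))) = m (f1 (f2 e2)) (m (f1 e1) a)"
      using rel_inv_comp_right[OF r2, of "g1 a"] rel_inv_comp_right[OF r1 a] f1 g1 f2e2 a by simp
    also have "\<dots> = m (f1 e1) (m (f1 (f2 e2)) a)" using idems_left_commute[OF f1f2e2 f1e1 a] .
    also have "\<dots> = m (f1 (f2 E)) a" using f_E f1e1 f1f2e2 a by simp
    finally show ?thesis .
  qed
  moreover have "m E (g2 (g1 a)) = g2 (g1 a)" if a: "a \<in> S" for a
    using rel_inv_image_left[OF r2, of "g1 a"] rel_inv_image_left[OF r1 a] g1 g2 e1 e2 g2e1 a
    by (simp add: E_def flip: endo_mult)
  moreover have "m (f1 (f2 E)) (f1 (f2 a)) = f1 (f2 a)" if a: "a \<in> S" for a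
    using rel_inv_image_right[OF r2 a] rel_inv_image_right[OF r1, of "f2 a"] f1 f2 f1e1 f2e2 a f_E
    by (simp flip: endo_mult)
  ultimately show ?thesis
    unfolding rel_inv_def E_def[symmetric] using f1 f2 g1 g2 E by (auto simp: compose_eq)
qed

lemma restrict_idem_mult_commute:
  "e \<in> idems S m \<Longrightarrow> e' \<in> idems S m \<Longrightarrow>
   compose S (restrict (m e) S) (restrict (m e') S) = compose S (restrict (m e') S) (restrict (m e) S)"
  by (auto simp: compose_def fun_eq_iff idems_left_commute)

lemma iend_iff: "f \<in> iend S m \<longleftrightarrow> (\<exists>g e. rel_inv f g e)"
  unfolding iend_def by (simp add: rel_invertible_iff)

lemma iend_subset_endos: "iend S m \<subseteq> endos S m"
  unfolding iend_def rel_invertible_def by blast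

lemma iend_compose: "f \<in> iend S m \<Longrightarrow> g \<in> iend S m \<Longrightarrow> compose S f g \<in> iend S m"
  using rel_inv_compose iend_iff by meson

lemma iend_semigrp: "semigrp (iend S m) (compose S)"
proof -
  have "f \<in> S \<rightarrow> S" if "f \<in> iend S m" for f
    using that iend_subset_endos by (auto simp: Pi_iff)
  then show ?thesis unfolding semigrp_def by (metis iend_compose compose_assoc)
qed

lemma iend_idempotents_commute:
  assumes "f \<in> iend S m" "g \<in> iend S m" "compose S f f = f" "compose S g g = g"
  shows "compose S f g = compose S g f"
proof -
  obtain f' e where f: "rel_inv f f' e" using assms(1) iend_iff by blast
  obtain g' e' where g: "rel_inv g g' e'" using assms(2) iend_iff by blast
  show ?thesis
    using rel_inv_idempotent[OF f assms(3)] rel_inv_idempotent[OF g assms(4)]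
      restrict_idem_mult_commute[OF rel_inv_idem[OF f] rel_inv_idem[OF g]] by simp
qed

lemma iend_inverse_semigrp: "inverse_semigrp (iend S m) (compose S)"
  unfolding inverse_semigrp_def
proof (intro conjI iend_semigrp ballI)
  fix f assume f: "f \<in> iend S m"
  then obtain g e where r: "rel_inv f g e" using iend_iff by blast
  have g: "g \<in> iend S m" using rel_inv_sym[OF r] iend_iff by blast
  have fgf: "compose S (compose S f g) f = f" and gfg: "compose S (compose S g f) g = g"
    using rel_inv_regular[OF r] rel_inv_regular[OF rel_inv_sym[OF r]] by simp_all
  show "\<exists>!g. g \<in> iend S m \<and> compose S (compose S f g) f = f \<and> compose S (compose S g f) g = g"
  proof (rule ex1I[of _ g])
    fix g' assume "g' \<in> iend S m \<and> compose S (compose S f g') f = f \<and> compose S (compose S g' f) g' = g'"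
    then show "g' = g"
      using semigrp_inverse_unique[OF iend_semigrp iend_idempotents_commute f _ g _ _ fgf gfg] by blast
  qed (use g fgf gfg in blast)
qed

definition idem_of :: "('a \<Rightarrow> 'a) \<Rightarrow> 'a" where
  "idem_of f = (SOME e. \<exists>g. rel_inv f g e)"

definition partial_iso :: "('a \<Rightarrow> 'a) \<Rightarrow> 'a \<Rightarrow> 'a option" where
  "partial_iso f = (\<lambda>x. if x \<in> unital_ideal S m (idem_of f) then Some (f x) else None)"

lemma idem_of_eq: "rel_inv f g e \<Longrightarrow> idem_of f = e"
  unfolding idem_of_def by (rule some_equality) (auto intro: rel_inv_unique)

lemma partial_iso_eq:
  "rel_inv f g e \<Longrightarrow> partial_iso f = (\<lambda>x. if x \<in> unital_ideal S m e then Some (f x) else None)"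
  unfolding partial_iso_def by (simp add: idem_of_eq)

lemma rel_inv_image_unital_ideal:
  assumes r: "rel_inv f g e"
  shows "f ` unital_ideal S m e = unital_ideal S m (f e)"
proof -
  note f = rel_inv_endos(1)[OF r] and g = rel_inv_endos(2)[OF r] and e = rel_inv_idem[OF r]
  have "f x \<in> unital_ideal S m (f e)" if "x \<in> unital_ideal S m e" for x
    using that f e endo_mult[OF f, of e x, symmetric] by (simp add: unital_ideal_iff endo_idems)
  moreover have "y \<in> f ` unital_ideal S m e" if "y \<in> unital_ideal S m (f e)" for y
  proof
    show "y = f (g y)" using that rel_inv_comp_right[OF r] by (simp add: unital_ideal_iff endo_idems f e)
    show "g y \<in> unital_ideal S m e"
      using that rel_inv_image_left[OF r] g e by (simp add: unital_ideal_iff endo_idems f)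
  qed
  ultimately show ?thesis by blast
qed

lemma partial_iso_Iui:
  assumes r: "rel_inv f g e"
  shows "partial_iso f \<in> Iui S m"
proof -
  note f = rel_inv_endos(1)[OF r] and e = rel_inv_idem[OF r]
  have dom: "dom (partial_iso f) = unital_ideal S m e"
    by (simp add: partial_iso_eq[OF r] dom_def)
  have "ran (partial_iso f) = f ` unital_ideal S m e"
    by (auto simp: partial_iso_eq[OF r] ran_def)
  then have ran: "ran (partial_iso f) = unital_ideal S m (f e)"
    using rel_inv_image_unital_ideal[OF r] by simp
  have "inj_on f (unital_ideal S m e)"
    by (rule inj_on_inverseI[where g = g]) (simp add: rel_inv_comp_left[OF r] unital_ideal_iff e)
  then have inj: "inj_on (partial_iso f) (dom (partial_iso f))"
    unfolding dom by (auto simp: partial_iso_eq[OF r] inj_on_def)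
  have "partial_iso f (m x y) = Some (m (the (partial_iso f x)) (the (partial_iso f y)))"
    if "x \<in> unital_ideal S m e" "y \<in> unital_ideal S m e" for x y
    using that unital_ideal_mult[OF e that] f
    by (simp add: partial_iso_eq[OF r]) (simp add: unital_ideal_iff e)
  then show ?thesis
    unfolding Iui_def using e endo_idems[OF f e] dom ran inj by auto
qed

lemma partial_iso_inj:
  assumes r1: "rel_inv f1 g1 e1" and r2: "rel_inv f2 g2 e2"
    and eq: "partial_iso f1 = partial_iso f2"
  shows "f1 = f2"
proof -
  have "dom (partial_iso f1) = unital_ideal S m e1" "dom (partial_iso f2) = unital_ideal S m e2"
    by (simp_all add: partial_iso_eq[OF r1] partial_iso_eq[OF r2] dom_def)
  then have e: "e1 = e2"
    using unital_ideal_inj[OF rel_inv_idem[OF r1] rel_inv_idem[OF r2]] eq by simp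
  show ?thesis
  proof (rule endo_eqI[OF rel_inv_endos(1)[OF r1] rel_inv_endos(1)[OF r2]])
    fix a assume a: "a \<in> S"
    have "m e1 a \<in> unital_ideal S m e1" using a rel_inv_idem[OF r1] by (simp add: unital_ideal_iff)
    then have "f1 (m e1 a) = f2 (m e2 a)"
      using fun_cong[OF eq, of "m e1 a"] e by (simp add: partial_iso_eq[OF r1] partial_iso_eq[OF r2])
    then show "f1 a = f2 a" using rel_inv_absorb[OF r1 a] rel_inv_absorb[OF r2 a] by simp
  qed
qed

definition ideal_extension :: "'a \<Rightarrow> ('a \<Rightarrow> 'a) \<Rightarrow> 'a \<Rightarrow> 'a" where
  "ideal_extension e q = restrict (\<lambda>a. q (m e a)) S"

lemma ideal_extension_endo:
  assumes e: "e \<in> idems S m" and q: "q ` unital_ideal S m e \<subseteq> S"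
    and q_mult: "\<And>x y. x \<in> unital_ideal S m e \<Longrightarrow> y \<in> unital_ideal S m e \<Longrightarrow>
                   q (m x y) = m (q x) (q y)"
  shows "ideal_extension e q \<in> endos S m"
proof -
  have e_mem: "m e a \<in> unital_ideal S m e" if "a \<in> S" for a
    using that e by (simp add: unital_ideal_iff)
  show ?thesis
    unfolding endos_def ideal_extension_def
    using q e_mem q_mult[OF e_mem e_mem] idem_distrib[OF e] by (auto simp: restrict_PiE_iff)
qed

lemma rel_inv_ideal_extension:
  assumes e: "e \<in> idems S m" and f: "f \<in> idems S m"
    and q: "bij_betw q (unital_ideal S m e) (unital_ideal S m f)"
    and q_mult: "\<And>x y. x \<in> unital_ideal S m e \<Longrightarrow> y \<in> unital_ideal S m e \<Longrightarrow>
                   q (m x y) = m (q x) (q y)"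
  shows "rel_inv (ideal_extension e q) (ideal_extension f (inv_into (unital_ideal S m e) q)) e"
proof -
  let ?E = "unital_ideal S m e" and ?F = "unital_ideal S m f"
  let ?r = "inv_into (unital_ideal S m e) q"
  have q_in: "q x \<in> ?F" if "x \<in> ?E" for x using q that by (auto simp: bij_betw_def)
  have r: "bij_betw ?r ?F ?E" using q by (rule bij_betw_inv_into)
  have r_in: "?r y \<in> ?E" if "y \<in> ?F" for y using r that by (auto simp: bij_betw_def)
  have r_q: "?r (q x) = x" if "x \<in> ?E" for x using q that by (simp add: bij_betw_inv_into_left)
  have q_r: "q (?r y) = y" if "y \<in> ?F" for y using q that by (simp add: bij_betw_inv_into_right)
  have r_mult: "?r (m x y) = m (?r x) (?r y)" if "x \<in> ?F" "y \<in> ?F" for x y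
    using inv_into_hom[where mul = m and mul' = m and q = q and A = ?E and B = ?F,
        OF q unital_ideal_mult[OF e] q_mult that] .
  have q_e: "q e = f"
    using is_identity_of_hom_image[where mul = m and mul' = m and q = q and A = ?E and B = ?F,
        OF unital_ideal_identity[OF e] unital_ideal_identity[OF f] _ q_mult] q
    by (simp add: bij_betw_def)
  have E_mem: "m e a \<in> ?E" and F_mem: "m f a \<in> ?F" if "a \<in> S" for a
    using that e f by (simp_all add: unital_ideal_iff)
  note E_iff = unital_ideal_iff[OF e] and F_iff = unital_ideal_iff[OF f]
  have ext_q: "ideal_extension e q \<in> endos S m"
    by (rule ideal_extension_endo[where q = q, OF e _ q_mult]) (use q_in in \<open>auto simp: F_iff\<close>)
  have ext_r: "ideal_extension f ?r \<in> endos S m"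
    by (rule ideal_extension_endo[where q = ?r, OF f _ r_mult]) (use r_in in \<open>auto simp: E_iff\<close>)
  have q_ext_e: "ideal_extension e q e = f" using e q_e by (simp add: ideal_extension_def)
  have "ideal_extension f ?r (ideal_extension e q a) = m e a" if "a \<in> S" for a
    using that q_in[OF E_mem] r_q[OF E_mem] by (simp add: ideal_extension_def F_iff)
  moreover have "ideal_extension e q (ideal_extension f ?r a) = m f a" if "a \<in> S" for a
    using that r_in[OF F_mem] q_r[OF F_mem] by (simp add: ideal_extension_def E_iff)
  moreover have "m e (ideal_extension f ?r a) = ideal_extension f ?r a" if "a \<in> S" for a
    using that r_in[OF F_mem] by (simp add: ideal_extension_def E_iff)
  moreover have "m f (ideal_extension e q a) = ideal_extension e q a" if "a \<in> S" for a
    using that q_in[OF E_mem] by (simp add: ideal_extension_def F_iff)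
  ultimately show ?thesis unfolding rel_inv_def q_ext_e using e ext_q ext_r by blast
qed

lemma partial_iso_ideal_extension:
  assumes "rel_inv (ideal_extension e q) g e"
  shows "partial_iso (ideal_extension e q) =
           (\<lambda>x. if x \<in> unital_ideal S m e then Some (q x) else None)"
  unfolding partial_iso_eq[OF assms]
  using rel_inv_idem[OF assms] by (auto simp: ideal_extension_def unital_ideal_iff fun_eq_iff)

lemma partial_iso_surj:
  assumes "p \<in> Iui S m"
  shows "\<exists>\<phi>\<in>iend S m. partial_iso \<phi> = p"
proof -
  obtain e f where e: "e \<in> idems S m" and f: "f \<in> idems S m"
    and dom: "dom p = unital_ideal S m e" and ran: "ran p = unital_ideal S m f"
    and inj: "inj_on p (dom p)"
    and p_mult: "\<forall>x\<in>dom p. \<forall>y\<in>dom p. p (m x y) = Some (m (the (p x)) (the (p y)))"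
    using assms unfolding Iui_def by blast
  define q where "q x = the (p x)" for x
  have p_eq: "p = (\<lambda>x. if x \<in> unital_ideal S m e then Some (q x) else None)"
  proof
    fix x show "p x = (if x \<in> unital_ideal S m e then Some (q x) else None)"
      unfolding dom[symmetric] by (cases "p x") (auto simp: q_def)
  qed
  have "bij_betw q (unital_ideal S m e) (unital_ideal S m f)"
  proof (rule bij_betw_imageI)
    show "inj_on q (unital_ideal S m e)"
      using inj unfolding dom by (subst (asm) p_eq) (auto simp: inj_on_def)
    have "ran p = q ` unital_ideal S m e" by (subst p_eq) (auto simp: ran_def)
    then show "q ` unital_ideal S m e = unital_ideal S m f" using ran by simp
  qed
  moreover have "q (m x y) = m (q x) (q y)"
    if "x \<in> unital_ideal S m e" "y \<in> unital_ideal S m e" for x y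
    using p_mult that unfolding dom q_def by simp
  ultimately have r: "rel_inv (ideal_extension e q)
                         (ideal_extension f (inv_into (unital_ideal S m e) q)) e"
    by (rule rel_inv_ideal_extension[OF e f])
  show ?thesis
    using r iend_iff partial_iso_ideal_extension[OF r] p_eq by blast
qed

lemma unital_ideal_compose_iff:
  assumes r1: "rel_inv f1 g1 e1" and r2: "rel_inv f2 g2 e2"
  shows "x \<in> unital_ideal S m (m (g2 e1) e2) \<longleftrightarrow>
         x \<in> unital_ideal S m e2 \<and> f2 x \<in> unital_ideal S m e1"
proof -
  note f2 = rel_inv_endos(1)[OF r2] and g2 = rel_inv_endos(2)[OF r2]
    and e1 = rel_inv_idem[OF r1] and e2 = rel_inv_idem[OF r2]
  have g2e1: "g2 e1 \<in> idems S m" using g2 e1 by blast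
  have f2_g2e1: "f2 (g2 e1) = m (f2 e2) e1" using rel_inv_comp_right[OF r2] e1 by simp
  show ?thesis
  proof (cases "x \<in> S")
    case x: True
    have "m (m (g2 e1) e2) x = x \<longleftrightarrow> m e2 x = x \<and> m (g2 e1) x = x"
      using idems_mult_fixed_iff[OF g2e1 e2 x] by blast
    also have "\<dots> \<longleftrightarrow> m e2 x = x \<and> m e1 (f2 x) = f2 x"
    proof (intro conj_cong refl)
      assume e2x: "m e2 x = x"
      have "m (g2 e1) x = g2 (m e1 (f2 x))"
        using rel_inv_comp_left[OF r2 x] e2x e1 f2 g2 x by simp
      moreover have "f2 (m (g2 e1) x) = m e1 (f2 x)"
        using f2_g2e1 rel_inv_image_right[OF r2 x] e1 e2 f2 g2e1 x
          idems_left_commute[of e1 "f2 e2" "f2 x"] by (simp add: endo_idems)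
      ultimately show "m (g2 e1) x = x \<longleftrightarrow> m e1 (f2 x) = f2 x"
        using rel_inv_comp_left[OF r2 x] e2x by metis
    qed
    finally show ?thesis using x e1 e2 g2e1 f2 by (simp add: unital_ideal_iff idems_mult)
  next
    case False
    then show ?thesis using e1 e2 g2e1 by (simp add: unital_ideal_iff idems_mult)
  qed
qed

lemma partial_iso_compose:
  assumes r1: "rel_inv f1 g1 e1" and r2: "rel_inv f2 g2 e2"
  shows "partial_iso (compose S f1 f2) = partial_iso f1 \<circ>\<^sub>m partial_iso f2"
proof
  fix x
  note r = rel_inv_compose[OF r1 r2]
  show "partial_iso (compose S f1 f2) x = (partial_iso f1 \<circ>\<^sub>m partial_iso f2) x"
    using unital_ideal_compose_iff[OF r1 r2, of x] rel_inv_idem[OF r2]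
    by (auto simp: partial_iso_eq[OF r] partial_iso_eq[OF r1] partial_iso_eq[OF r2] map_comp_def
        compose_eq unital_ideal_iff)
qed

lemma partial_iso_bij: "bij_betw partial_iso (iend S m) (Iui S m)"
proof (rule bij_betw_imageI)
  show "inj_on partial_iso (iend S m)"
    using partial_iso_inj by (auto simp: inj_on_def iend_iff)
  show "partial_iso ` iend S m = Iui S m"
    using partial_iso_Iui partial_iso_surj by (fastforce simp: iend_iff)
qed

lemma partial_iso_iend_compose:
  "f \<in> iend S m \<Longrightarrow> g \<in> iend S m \<Longrightarrow>
   partial_iso (compose S f g) = partial_iso f \<circ>\<^sub>m partial_iso g"
  using partial_iso_compose by (auto simp: iend_iff)

end

theorem proposition3p4:
  fixes S :: "'a set" and m :: "'a \<Rightarrow> 'a \<Rightarrow> 'a"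
  assumes "semilattice_of_groups S m"
  shows "iend S m \<subseteq> endos S m
    \<and> (\<forall>f\<in>iend S m. \<forall>g\<in>iend S m. compose S f g \<in> iend S m)
    \<and> inverse_semigrp (iend S m) (compose S)
    \<and> (\<exists>h. bij_betw h (iend S m) (Iui S m) \<and>
           (\<forall>f\<in>iend S m. \<forall>g\<in>iend S m. h (compose S f g) = h f \<circ>\<^sub>m h g))"
proof -
  interpret semilattice_groups S m by (rule semilattice_groups.intro) (fact assms)
  show ?thesis
    using iend_subset_endos iend_compose iend_inverse_semigrp partial_iso_bij
      partial_iso_iend_compose by blast
qed

end
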